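(* Let $B_0$ and $B_1$ be boards with $B_0\lessdot B_1$. If $B_0$ has a perfect layout, then $B_1$ also has a perfect layout.
   Context: A board is an $m\times n$ grid of unit cells in which exactly $c$ cells are sinks, one of each of $c$ colors, and all other cells are empty. A layout places, in some of the empty cells, arrows, each having one of the $c$ colors and one of the four cardinal directions. A packet of color $i$ may enter the grid through any unit edge of the outer boundary of the grid, into the adjacent cell, moving perpendicular to that edge into the grid; it moves one cell at a time in its current direction, and whenever it enters a cell containing an arrow of color $i$ its direction becomes that arrow's direction (arrows of other colors are ignored). The packet succeeds if it enters the sink of color $i$; it fails if it enters a sink of another color, leaves the grid, or travels forever without reaching a sink. A perfect layout is a layout in which every packet of every color entering through every boundary edge succeeds. For boards $B_0,B_1$, $B_0\lessdot B_1$ means that $B_0$ is obtained from $B_1$ by deleting a single row or column of $B_1$ that contains no sink. *)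

theory Defs
  imports Main
begin

text \<open>Row index grows southwards, column index grows eastwards.\<close>

datatype dir = North | South | East | West

fun delta :: "dir \<Rightarrow> int \<times> int" where
  "delta North = (-1, 0)"
| "delta South = (1, 0)"
| "delta East = (0, 1)"
| "delta West = (0, -1)"

record board =
  rows :: nat
  cols :: nat
  ncolors :: nat
  sink :: "nat \<Rightarrow> int \<times> int"

definition in_grid :: "board \<Rightarrow> int \<times> int \<Rightarrow> bool" where
  "in_grid B p \<longleftrightarrow> 0 \<le> fst p \<and> fst p < int (rows B) \<and> 0 \<le> snd p \<and> snd p < int (cols B)"

definition is_board :: "board \<Rightarrow> bool" where
  "is_board B \<longleftrightarrow> rows B \<ge> 1 \<and> cols B \<ge> 1 \<and> inj_on (sink B) {..<ncolors B}
     \<and> (\<forall>k<ncolors B. in_grid B (sink B k))"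

definition is_sink :: "board \<Rightarrow> int \<times> int \<Rightarrow> bool" where
  "is_sink B p \<longleftrightarrow> (\<exists>k<ncolors B. sink B k = p)"

type_synonym layout = "int \<times> int \<Rightarrow> (nat \<times> dir) option"

definition is_layout :: "board \<Rightarrow> layout \<Rightarrow> bool" where
  "is_layout B L \<longleftrightarrow> (\<forall>p k d. L p = Some (k, d) \<longrightarrow>
      in_grid B p \<and> \<not> is_sink B p \<and> k < ncolors B)"

text \<open>State of a packet of color k after t moves: the cell it has just entered
  and the direction in which it moved into that cell.\<close>
fun packet_state :: "layout \<Rightarrow> nat \<Rightarrow> int \<times> int \<Rightarrow> dir \<Rightarrow> nat \<Rightarrow> (int \<times> int) \<times> dir" where
  "packet_state L k p d 0 = (p, d)"
| "packet_state L k p d (Suc t) =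
     (let (q, e) = packet_state L k p d t;
          e' = (case L q of Some (k', a) \<Rightarrow> if k' = k then a else e | None \<Rightarrow> e)
      in ((fst q + fst (delta e'), snd q + snd (delta e')), e'))"

definition succeeds :: "board \<Rightarrow> layout \<Rightarrow> nat \<Rightarrow> int \<times> int \<Rightarrow> dir \<Rightarrow> bool" where
  "succeeds B L k p d \<longleftrightarrow> (\<exists>t. fst (packet_state L k p d t) = sink B k \<and>
     (\<forall>s<t. in_grid B (fst (packet_state L k p d s)) \<and> \<not> is_sink B (fst (packet_state L k p d s))))"

text \<open>Entry points: the boundary cell entered and the direction of motion,
  one for each unit edge of the outer boundary.\<close>
definition entries :: "board \<Rightarrow> ((int \<times> int) \<times> dir) set" where
  "entries B =
     {((i, 0), East) | i. 0 \<le> i \<and> i < int (rows B)}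
   \<union> {((i, int (cols B) - 1), West) | i. 0 \<le> i \<and> i < int (rows B)}
   \<union> {((0, j), South) | j. 0 \<le> j \<and> j < int (cols B)}
   \<union> {((int (rows B) - 1, j), North) | j. 0 \<le> j \<and> j < int (cols B)}"

definition perfect_layout :: "board \<Rightarrow> layout \<Rightarrow> bool" where
  "perfect_layout B L \<longleftrightarrow> is_layout B L \<and>
     (\<forall>k<ncolors B. \<forall>(p, d)\<in>entries B. succeeds B L k p d)"

definition has_perfect_layout :: "board \<Rightarrow> bool" where
  "has_perfect_layout B \<longleftrightarrow> (\<exists>L. perfect_layout B L)"

text \<open>B0 \<lessdot> B1: B0 arises from B1 by deleting a sink-free row or column.\<close>
definition covered_by :: "board \<Rightarrow> board \<Rightarrow> bool" where
  "covered_by B0 B1 \<longleftrightarrow> ncolors B0 = ncolors B1 \<and>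
    ((cols B0 = cols B1 \<and> rows B1 = rows B0 + 1 \<and>
      (\<exists>r. 0 \<le> r \<and> r < int (rows B1) \<and>
        (\<forall>k<ncolors B1. fst (sink B1 k) \<noteq> r \<and>
           sink B0 k = (if fst (sink B1 k) < r then sink B1 k
                        else (fst (sink B1 k) - 1, snd (sink B1 k))))))
   \<or> (rows B0 = rows B1 \<and> cols B1 = cols B0 + 1 \<and>
      (\<exists>c. 0 \<le> c \<and> c < int (cols B1) \<and>
        (\<forall>k<ncolors B1. snd (sink B1 k) \<noteq> c \<and>
           sink B0 k = (if snd (sink B1 k) < c then sink B1 k
                        else (fst (sink B1 k), snd (sink B1 k) - 1))))))"

end

theory Submission
  imports Defs
begin

text \<open>Deleting a sink-free line from \<open>B1\<close> amounts to collapsing two adjacent lines of \<open>B1\<close>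
  into one line of \<open>B0\<close>.  Pull a perfect layout of \<open>B0\<close> back along the collapse map; the only
  cells needing new arrows are the non-sink neighbours of sinks inside the doubled line, and
  these point to their sink.  A packet on \<open>B1\<close> then shadows the corresponding packet on
  \<open>B0\<close>: each move on \<open>B0\<close> is one move on \<open>B1\<close>, or two when it crosses the doubled line,
  and the cell in between carries the same arrow as the one just left.\<close>

definition turn :: "layout \<Rightarrow> nat \<Rightarrow> int \<times> int \<Rightarrow> dir \<Rightarrow> dir" where
  "turn L k q e = (case L q of Some (k', a) \<Rightarrow> if k' = k then a else e | None \<Rightarrow> e)"

definition move :: "int \<times> int \<Rightarrow> dir \<Rightarrow> int \<times> int" where
  "move q e = (fst q + fst (delta e), snd q + snd (delta e))"

definition stays_clear :: "board \<Rightarrow> layout \<Rightarrow> nat \<Rightarrow> int \<times> int \<Rightarrow> dir \<Rightarrow> nat \<Rightarrow> bool" where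
  "stays_clear B L k p d t \<longleftrightarrow> (\<forall>s<t. in_grid B (fst (packet_state L k p d s))
     \<and> \<not> is_sink B (fst (packet_state L k p d s)))"

lemma mem_entries:
  "(p, d) \<in> entries B \<longleftrightarrow>
     (d = East \<and> snd p = 0 \<and> 0 \<le> fst p \<and> fst p < int (rows B))
   \<or> (d = West \<and> snd p = int (cols B) - 1 \<and> 0 \<le> fst p \<and> fst p < int (rows B))
   \<or> (d = South \<and> fst p = 0 \<and> 0 \<le> snd p \<and> snd p < int (cols B))
   \<or> (d = North \<and> fst p = int (rows B) - 1 \<and> 0 \<le> snd p \<and> snd p < int (cols B))"
  by (cases p) (auto simp: entries_def)

lemma packet_state_Suc_eq:
  "packet_state L k p d t = (q, e) \<Longrightarrow>
    packet_state L k p d (Suc t) = (move q (turn L k q e), turn L k q e)"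
  by (simp add: turn_def move_def Let_def)

lemma turn_turn: "turn L k q (turn L k q e) = turn L k q e"
  by (auto simp: turn_def split: option.splits)

lemma succeeds_iff:
  "succeeds B L k p d \<longleftrightarrow> (\<exists>t. fst (packet_state L k p d t) = sink B k \<and> stays_clear B L k p d t)"
  by (simp add: succeeds_def stays_clear_def)

lemma stays_clear_0 [simp]: "stays_clear B L k p d 0"
  by (simp add: stays_clear_def)

lemma stays_clear_Suc:
  "stays_clear B L k p d (Suc t) \<longleftrightarrow> stays_clear B L k p d t
     \<and> in_grid B (fst (packet_state L k p d t)) \<and> \<not> is_sink B (fst (packet_state L k p d t))"
  by (auto simp: stays_clear_def less_Suc_eq)

locale contraction =
  fixes B0 B1 :: board and \<phi> :: "int \<times> int \<Rightarrow> int \<times> int"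
  assumes collapse_move: "\<And>q e. \<phi> (move q e) = move (\<phi> q) e
      \<or> (\<phi> (move q e) = \<phi> q \<and> \<phi> (move (move q e) e) = move (\<phi> q) e)"
    and collapse_fibre_adjacent: "\<And>p q. \<phi> p = \<phi> q \<Longrightarrow> p \<noteq> q \<Longrightarrow> \<exists>e. move p e = q"
    and in_grid_collapse: "\<And>q. in_grid B0 (\<phi> q) \<Longrightarrow> in_grid B1 q"
    and collapse_sink: "\<And>k. k < ncolors B1 \<Longrightarrow> \<phi> (sink B1 k) = sink B0 k"
    and ncolors_eq: "ncolors B0 = ncolors B1"
    and is_board0: "is_board B0"
    and collapse_entries: "\<And>p d. (p, d) \<in> entries B1 \<Longrightarrow> (\<phi> p, d) \<in> entries B0"
begin

definition sink_color :: "int \<times> int \<Rightarrow> nat" where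
  "sink_color q = (SOME k. k < ncolors B0 \<and> sink B0 k = q)"

definition lift :: "layout \<Rightarrow> layout" where
  "lift L0 q = (if in_grid B1 q \<and> \<not> is_sink B1 q \<and> is_sink B0 (\<phi> q)
     then Some (sink_color (\<phi> q), SOME e. move q e = sink B1 (sink_color (\<phi> q)))
     else L0 (\<phi> q))"

lemma sink_color_sink: "k < ncolors B0 \<Longrightarrow> sink_color (sink B0 k) = k"
proof -
  assume k: "k < ncolors B0"
  have "sink_color (sink B0 k) < ncolors B0 \<and> sink B0 (sink_color (sink B0 k)) = sink B0 k"
    unfolding sink_color_def by (rule someI[of _ k]) (use k in simp)
  with k is_board0 show ?thesis
    unfolding is_board_def inj_on_def by blast
qed

lemma is_sink_collapse: "is_sink B1 q \<Longrightarrow> is_sink B0 (\<phi> q)"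
  using collapse_sink ncolors_eq unfolding is_sink_def by metis

lemma sink_fibre: "is_sink B1 q \<Longrightarrow> \<phi> q = sink B0 k \<Longrightarrow> k < ncolors B1 \<Longrightarrow> q = sink B1 k"
  using collapse_sink sink_color_sink ncolors_eq unfolding is_sink_def by metis

lemma lift_eq: "\<not> is_sink B0 (\<phi> q) \<Longrightarrow> lift L0 q = L0 (\<phi> q)"
  by (simp add: lift_def)

lemma turn_lift: "\<not> is_sink B0 (\<phi> q) \<Longrightarrow> turn (lift L0) k q e = turn L0 k (\<phi> q) e"
  by (simp add: turn_def lift_eq)

lemma lift_points_to_sink:
  assumes "in_grid B1 q" "\<not> is_sink B1 q" "\<phi> q = sink B0 k" "k < ncolors B1"
  shows "\<exists>e. lift L0 q = Some (k, e) \<and> move q e = sink B1 k"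
proof -
  have color: "sink_color (\<phi> q) = k"
    using assms(3,4) ncolors_eq sink_color_sink by simp
  have "is_sink B0 (\<phi> q)"
    using assms(3,4) ncolors_eq unfolding is_sink_def by auto
  moreover have "\<exists>e. move q e = sink B1 k"
    using collapse_fibre_adjacent[of q "sink B1 k"] collapse_sink assms
    unfolding is_sink_def by auto
  ultimately show ?thesis
    using assms(1,2) color unfolding lift_def by (auto intro: someI_ex)
qed

lemma is_layout_lift: "is_layout B0 L0 \<Longrightarrow> is_layout B1 (lift L0)"
  unfolding is_layout_def
proof (intro allI impI)
  fix q k d
  assume L0: "\<forall>p k d. L0 p = Some (k, d) \<longrightarrow> in_grid B0 p \<and> \<not> is_sink B0 p \<and> k < ncolors B0"
    and arrow: "lift L0 q = Some (k, d)"
  show "in_grid B1 q \<and> \<not> is_sink B1 q \<and> k < ncolors B1"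
  proof (cases "in_grid B1 q \<and> \<not> is_sink B1 q \<and> is_sink B0 (\<phi> q)")
    case True
    then obtain k' where "k' < ncolors B0" "\<phi> q = sink B0 k'"
      unfolding is_sink_def by metis
    with True arrow show ?thesis
      using ncolors_eq sink_color_sink unfolding lift_def by auto
  next
    case False
    with arrow L0 show ?thesis
      using in_grid_collapse is_sink_collapse ncolors_eq unfolding lift_def by (metis (full_types))
  qed
qed

lemma simulation:
  assumes clear0: "stays_clear B0 L0 k (\<phi> p) d T"
  shows "t0 \<le> T \<Longrightarrow> \<exists>t1. map_prod \<phi> id (packet_state (lift L0) k p d t1) = packet_state L0 k (\<phi> p) d t0
      \<and> stays_clear B1 (lift L0) k p d t1"
proof (induction t0)
  case 0
  show ?case by (intro exI[of _ 0]) simp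
next
  case (Suc t0)
  then obtain t1 where
    corr: "map_prod \<phi> id (packet_state (lift L0) k p d t1) = packet_state L0 k (\<phi> p) d t0"
    and clear1: "stays_clear B1 (lift L0) k p d t1"
    by (meson Suc_leD)
  obtain q e where s1: "packet_state (lift L0) k p d t1 = (q, e)"
    by (cases "packet_state (lift L0) k p d t1")
  with corr have s0: "packet_state L0 k (\<phi> p) d t0 = (\<phi> q, e)" by simp
  have q0_clear: "in_grid B0 (\<phi> q)" "\<not> is_sink B0 (\<phi> q)"
    using clear0 Suc.prems s0 unfolding stays_clear_def by (metis Suc_le_lessD fst_conv)+
  then have q_clear: "in_grid B1 q" "\<not> is_sink B1 q"
    using in_grid_collapse is_sink_collapse by blast+
  define e' where "e' = turn L0 k (\<phi> q) e"
  have s0': "packet_state L0 k (\<phi> p) d (Suc t0) = (move (\<phi> q) e', e')"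
    using packet_state_Suc_eq[OF s0] unfolding e'_def .
  have s1': "packet_state (lift L0) k p d (Suc t1) = (move q e', e')"
    using packet_state_Suc_eq[OF s1] turn_lift[OF q0_clear(2)] unfolding e'_def by simp
  have clear1': "stays_clear B1 (lift L0) k p d (Suc t1)"
    using clear1 q_clear s1 by (simp add: stays_clear_Suc)
  from collapse_move[of q e'] show ?case
  proof
    assume "\<phi> (move q e') = move (\<phi> q) e'"
    with s0' s1' clear1' show ?case by (intro exI[of _ "Suc t1"]) simp
  next
    txt \<open>Crossing the doubled line: the intermediate cell collapses onto \<open>\<phi> q\<close> as well, so
      it repeats the turn just taken, which changes nothing.\<close>
    assume mid: "\<phi> (move q e') = \<phi> q \<and> \<phi> (move (move q e') e') = move (\<phi> q) e'"
    have "turn (lift L0) k (move q e') e' = e'"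
      using mid turn_lift[of "move q e'"] q0_clear(2) turn_turn unfolding e'_def by simp
    then have s1'': "packet_state (lift L0) k p d (Suc (Suc t1)) = (move (move q e') e', e')"
      using packet_state_Suc_eq[OF s1'] by simp
    have "in_grid B1 (move q e')" "\<not> is_sink B1 (move q e')"
      using mid q0_clear in_grid_collapse is_sink_collapse by metis+
    with clear1' s1' have "stays_clear B1 (lift L0) k p d (Suc (Suc t1))"
      by (simp add: stays_clear_Suc)
    with s0' s1'' mid show ?case by (intro exI[of _ "Suc (Suc t1)"]) simp
  qed
qed

lemma succeeds_lift:
  assumes k: "k < ncolors B1" and success: "succeeds B0 L0 k (\<phi> p) d"
  shows "succeeds B1 (lift L0) k p d"
proof -
  from success obtain T where
    arrive0: "fst (packet_state L0 k (\<phi> p) d T) = sink B0 k" and clear0: "stays_clear B0 L0 k (\<phi> p) d T"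
    unfolding succeeds_iff by blast
  from simulation[OF clear0 order_refl] obtain t1 where
    corr: "map_prod \<phi> id (packet_state (lift L0) k p d t1) = packet_state L0 k (\<phi> p) d T"
    and clear1: "stays_clear B1 (lift L0) k p d t1"
    by blast
  obtain q e where s1: "packet_state (lift L0) k p d t1 = (q, e)"
    by (cases "packet_state (lift L0) k p d t1")
  with corr arrive0 have q: "\<phi> q = sink B0 k" by (metis fst_conv fst_map_prod)
  show ?thesis
  proof (cases "is_sink B1 q")
    case True
    from True q k have "q = sink B1 k" by (rule sink_fibre)
    with s1 clear1 show ?thesis unfolding succeeds_iff by (intro exI[of _ t1]) simp
  next
    case False
    have "in_grid B1 q"
      using q k ncolors_eq is_board0 in_grid_collapse unfolding is_board_def by metis
    with False q k obtain e' where e': "lift L0 q = Some (k, e')" "move q e' = sink B1 k"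
      using lift_points_to_sink by blast
    then have "fst (packet_state (lift L0) k p d (Suc t1)) = sink B1 k"
      using packet_state_Suc_eq[OF s1] by (simp add: turn_def)
    moreover have "stays_clear B1 (lift L0) k p d (Suc t1)"
      using clear1 s1 \<open>in_grid B1 q\<close> False by (simp add: stays_clear_Suc)
    ultimately show ?thesis unfolding succeeds_iff by blast
  qed
qed

lemma perfect_layout_lift: "perfect_layout B0 L0 \<Longrightarrow> perfect_layout B1 (lift L0)"
  unfolding perfect_layout_def
  using is_layout_lift succeeds_lift collapse_entries ncolors_eq by fastforce

lemma has_perfect_layout: "has_perfect_layout B0 \<Longrightarrow> has_perfect_layout B1"
  unfolding has_perfect_layout_def using perfect_layout_lift by blast

end

definition merge_rows :: "int \<Rightarrow> int \<times> int \<Rightarrow> int \<times> int" where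
  "merge_rows a q = (if fst q \<le> a then fst q else fst q - 1, snd q)"

definition merge_cols :: "int \<Rightarrow> int \<times> int \<Rightarrow> int \<times> int" where
  "merge_cols a q = (fst q, if snd q \<le> a then snd q else snd q - 1)"

lemma merge_rows_move:
  "merge_rows a (move q e) = move (merge_rows a q) e
    \<or> (merge_rows a (move q e) = merge_rows a q \<and> merge_rows a (move (move q e) e) = move (merge_rows a q) e)"
  by (cases e) (auto simp: merge_rows_def move_def)

lemma merge_cols_move:
  "merge_cols a (move q e) = move (merge_cols a q) e
    \<or> (merge_cols a (move q e) = merge_cols a q \<and> merge_cols a (move (move q e) e) = move (merge_cols a q) e)"
  by (cases e) (auto simp: merge_cols_def move_def)

lemma merge_rows_fibre:
  assumes "merge_rows a p = merge_rows a q" "p \<noteq> q"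
  shows "\<exists>e. move p e = q"
proof -
  from assms have "q = move p South \<or> q = move p North"
    by (auto simp: merge_rows_def move_def prod_eq_iff split: if_splits)
  then show ?thesis by metis
qed

lemma merge_cols_fibre:
  assumes "merge_cols a p = merge_cols a q" "p \<noteq> q"
  shows "\<exists>e. move p e = q"
proof -
  from assms have "q = move p East \<or> q = move p West"
    by (auto simp: merge_cols_def move_def prod_eq_iff split: if_splits)
  then show ?thesis by metis
qed

lemma contraction_merge_rows:
  assumes "0 \<le> a" "a < int (rows B0)" "rows B1 = rows B0 + 1" "cols B0 = cols B1"
    "ncolors B0 = ncolors B1" "is_board B0"
    "\<And>k. k < ncolors B1 \<Longrightarrow> merge_rows a (sink B1 k) = sink B0 k"
  shows "contraction B0 B1 (merge_rows a)"
proof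
  show "in_grid B1 q" if "in_grid B0 (merge_rows a q)" for q
    using that assms(1-4) by (auto simp: in_grid_def merge_rows_def split: if_splits)
  show "(merge_rows a p, d) \<in> entries B0" if "(p, d) \<in> entries B1" for p d
    using that assms(1-4) unfolding mem_entries by (auto simp: merge_rows_def)
  show "merge_rows a (sink B1 k) = sink B0 k" if "k < ncolors B1" for k
    using that by (fact assms)
qed (fact merge_rows_move merge_rows_fibre assms)+

lemma contraction_merge_cols:
  assumes "0 \<le> a" "a < int (cols B0)" "cols B1 = cols B0 + 1" "rows B0 = rows B1"
    "ncolors B0 = ncolors B1" "is_board B0"
    "\<And>k. k < ncolors B1 \<Longrightarrow> merge_cols a (sink B1 k) = sink B0 k"
  shows "contraction B0 B1 (merge_cols a)"
proof
  show "in_grid B1 q" if "in_grid B0 (merge_cols a q)" for q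
    using that assms(1-4) by (auto simp: in_grid_def merge_cols_def split: if_splits)
  show "(merge_cols a p, d) \<in> entries B0" if "(p, d) \<in> entries B1" for p d
    using that assms(1-4) unfolding mem_entries by (auto simp: merge_cols_def)
  show "merge_cols a (sink B1 k) = sink B0 k" if "k < ncolors B1" for k
    using that by (fact assms)
qed (fact merge_cols_move merge_cols_fibre assms)+

theorem mainTheorem15:
  assumes "is_board B0" and "is_board B1" and "covered_by B0 B1"
    and "has_perfect_layout B0"
  shows "has_perfect_layout B1"
proof -
  have nc: "ncolors B0 = ncolors B1" and size: "rows B0 \<ge> 1" "cols B0 \<ge> 1"
    using assms(1,3) unfolding covered_by_def is_board_def by auto
  txt \<open>The deleted line \<open>r\<close> is merged with the following one, or with the preceding one
    when it is the last line.\<close>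
  from assms(3) nc consider
    (row) r where "cols B0 = cols B1" "rows B1 = rows B0 + 1" "0 \<le> r" "r < int (rows B1)"
      "\<And>k. k < ncolors B1 \<Longrightarrow> merge_rows (if r < int (rows B0) then r else r - 1) (sink B1 k) = sink B0 k"
  | (col) c where "rows B0 = rows B1" "cols B1 = cols B0 + 1" "0 \<le> c" "c < int (cols B1)"
      "\<And>k. k < ncolors B1 \<Longrightarrow> merge_cols (if c < int (cols B0) then c else c - 1) (sink B1 k) = sink B0 k"
    unfolding covered_by_def merge_rows_def merge_cols_def by (fastforce simp: prod_eq_iff)
  then show ?thesis
  proof cases
    case row
    then have "contraction B0 B1 (merge_rows (if r < int (rows B0) then r else r - 1))"
      using size nc assms(1) by (intro contraction_merge_rows) auto
    then show ?thesis using assms(4) by (rule contraction.has_perfect_layout)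
  next
    case col
    then have "contraction B0 B1 (merge_cols (if c < int (cols B0) then c else c - 1))"
      using size nc assms(1) by (intro contraction_merge_cols) auto
    then show ?thesis using assms(4) by (rule contraction.has_perfect_layout)
  qed
qed

end
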